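(* Let $a<b$ and let $f:[a,b]\rightarrow\mathbb{R}$ be an absolutely continuous mapping with $f'\in L^2[a,b]$, and let $\sigma(f')=\|f'\|_2^2-\frac{(f(b)-f(a))^2}{b-a}$. Assume additionally that $f(a+b-x)=f(x)$ for all $x\in[a,b]$. Then for all $x\in[a,\frac{a+b}{2}]$, \[ \left|f(x)-\frac{1}{b-a}\int_{a}^{b}f(t)\,dt\right|\leq (b-a)^{-1/2} \left[\frac{(b-a)^2}{48}+\left(x-\frac{3a+b}{4}\right)^2\right]^{1/2}\sqrt{\sigma(f')}. \]
   Context: $\|g\|_2=\left(\int_a^b g(t)^2\,dt\right)^{1/2}$. *)

theory Defs
  imports "HOL-Analysis.Analysis"
begin

definition absolutely_continuous_on :: "real \<Rightarrow> real \<Rightarrow> (real \<Rightarrow> real) \<Rightarrow> bool" where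
  "absolutely_continuous_on a b f \<longleftrightarrow>
     (\<forall>\<epsilon>>0. \<exists>\<delta>>0. \<forall>(n::nat) (u::nat \<Rightarrow> real) (v::nat \<Rightarrow> real).
        (\<forall>i<n. a \<le> u i \<and> u i \<le> v i \<and> v i \<le> b) \<and>
        (\<forall>i<n. \<forall>j<n. i \<noteq> j \<longrightarrow> {u i<..<v i} \<inter> {u j<..<v j} = {}) \<and>
        (\<Sum>i<n. v i - u i) < \<delta>
        \<longrightarrow> (\<Sum>i<n. \<bar>f (v i) - f (u i)\<bar>) < \<epsilon>)"

end

theory Submission
  imports Defs
begin

text \<open>By integration by parts, \<open>(b - a) f(x) - \<integral>\<^sub>a\<^sup>b f\<close> equals \<open>\<integral>\<^sub>a\<^sup>b K f'\<close> for the
  Peano kernel \<open>K(t)\<close> equal to \<open>t - a\<close>, \<open>t - (a + b)/2\<close> and \<open>t - b\<close> on \<open>[a, x]\<close>,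
  \<open>[x, a + b - x]\<close> and \<open>[a + b - x, b]\<close>; the boundary terms combine because
  \<open>f(a + b - x) = f(x)\<close>. Cauchy--Schwarz then bounds it by \<open>\<parallel>K\<parallel>\<^sub>2 \<parallel>f'\<parallel>\<^sub>2\<close>, where
  \<open>\<parallel>K\<parallel>\<^sub>2\<^sup>2 = (b - a) ((b - a)\<^sup>2/48 + (x - (3a + b)/4)\<^sup>2)\<close>, and \<open>\<sigma>(f') = \<parallel>f'\<parallel>\<^sub>2\<^sup>2\<close>
  because \<open>f(a) = f(b)\<close>. Integration by parts rests on a fundamental theorem of calculus for
  absolutely continuous functions, proved with gauge integrals: at tags off the null set where
  \<open>f\<close> is not differentiable the derivative controls the Riemann sum, and the tags in that null
  set carry so little total length that absolute continuity makes their contribution small.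
  Cauchy--Schwarz is applied piecewise in the form \<open>|uv| \<le> s u\<^sup>2/2 + v\<^sup>2/(2s)\<close>,
  optimising over \<open>s\<close> at the end.\<close>

lemma absolutely_continuous_onE:
  assumes "absolutely_continuous_on a b f" and "\<epsilon> > 0"
  obtains \<delta> where "\<delta> > 0"
    and "\<And>(n::nat) u v. \<lbrakk>\<forall>i<n. a \<le> u i \<and> u i \<le> v i \<and> v i \<le> b;
                  \<forall>i<n. \<forall>j<n. i \<noteq> j \<longrightarrow> {u i<..<v i} \<inter> {u j<..<v j} = {};
                  (\<Sum>i<n. v i - u i) < \<delta>\<rbrakk> \<Longrightarrow> (\<Sum>i<n. \<bar>f (v i) - f (u i)\<bar>) < \<epsilon>"
proof -
  obtain \<delta> where "\<delta> > 0" and \<delta>: "\<forall>(n::nat) u v. (\<forall>i<n. a \<le> u i \<and> u i \<le> v i \<and> v i \<le> b) \<and>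
      (\<forall>i<n. \<forall>j<n. i \<noteq> j \<longrightarrow> {u i<..<v i} \<inter> {u j<..<v j} = {}) \<and>
      (\<Sum>i<n. v i - u i) < \<delta> \<longrightarrow> (\<Sum>i<n. \<bar>f (v i) - f (u i)\<bar>) < \<epsilon>"
    using assms unfolding absolutely_continuous_on_def by blast
  show thesis
    using \<delta> by (intro that[OF \<open>\<delta> > 0\<close>]) blast
qed

lemma absolutely_continuous_on_imp_continuous_on:
  assumes "absolutely_continuous_on a b f"
  shows "continuous_on {a..b} f"
  unfolding continuous_on_iff
proof (intro ballI allI impI)
  fix x \<epsilon> :: real
  assume x: "x \<in> {a..b}" and "\<epsilon> > 0"
  from \<open>\<epsilon> > 0\<close> obtain \<delta> where "\<delta> > 0" and \<delta>: "\<And>(n::nat) u v. \<lbrakk>\<forall>i<n. a \<le> u i \<and> u i \<le> v i \<and> v i \<le> b;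
      \<forall>i<n. \<forall>j<n. i \<noteq> j \<longrightarrow> {u i<..<v i} \<inter> {u j<..<v j} = {};
      (\<Sum>i<n. v i - u i) < \<delta>\<rbrakk> \<Longrightarrow> (\<Sum>i<n. \<bar>f (v i) - f (u i)\<bar>) < \<epsilon>"
    using absolutely_continuous_onE[OF assms] by blast
  have "dist (f y) (f x) < \<epsilon>" if "y \<in> {a..b}" "dist y x < \<delta>" for y
    using \<delta>[of 1 "\<lambda>_. min x y" "\<lambda>_. max x y"] x that
    by (cases "x \<le> y") (auto simp: dist_real_def abs_minus_commute)
  with \<open>\<delta> > 0\<close> show "\<exists>\<delta>>0. \<forall>y\<in>{a..b}. dist y x < \<delta> \<longrightarrow> dist (f y) (f x) < \<epsilon>"
    by blast
qed

lemma absolutely_continuous_on_subinterval: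
  assumes "absolutely_continuous_on a b f" and "a \<le> c" and "d \<le> b"
  shows "absolutely_continuous_on c d f"
  unfolding absolutely_continuous_on_def
proof (intro allI impI)
  fix \<epsilon> :: real
  assume "\<epsilon> > 0"
  with assms(1) obtain \<delta> where "\<delta> > 0" and \<delta>: "\<And>(n::nat) u v. \<lbrakk>\<forall>i<n. a \<le> u i \<and> u i \<le> v i \<and> v i \<le> b;
      \<forall>i<n. \<forall>j<n. i \<noteq> j \<longrightarrow> {u i<..<v i} \<inter> {u j<..<v j} = {};
      (\<Sum>i<n. v i - u i) < \<delta>\<rbrakk> \<Longrightarrow> (\<Sum>i<n. \<bar>f (v i) - f (u i)\<bar>) < \<epsilon>"
    using absolutely_continuous_onE by blast
  show "\<exists>\<delta>>0. \<forall>(n::nat) u v. (\<forall>i<n. c \<le> u i \<and> u i \<le> v i \<and> v i \<le> d) \<and>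
      (\<forall>i<n. \<forall>j<n. i \<noteq> j \<longrightarrow> {u i<..<v i} \<inter> {u j<..<v j} = {}) \<and>
      (\<Sum>i<n. v i - u i) < \<delta> \<longrightarrow> (\<Sum>i<n. \<bar>f (v i) - f (u i)\<bar>) < \<epsilon>"
  proof (intro exI[of _ \<delta>] conjI allI impI)
    fix n :: nat and u v :: "nat \<Rightarrow> real"
    assume uv: "(\<forall>i<n. c \<le> u i \<and> u i \<le> v i \<and> v i \<le> d) \<and>
      (\<forall>i<n. \<forall>j<n. i \<noteq> j \<longrightarrow> {u i<..<v i} \<inter> {u j<..<v j} = {}) \<and> (\<Sum>i<n. v i - u i) < \<delta>"
    have "\<forall>i<n. a \<le> u i \<and> u i \<le> v i \<and> v i \<le> b"
      using uv assms(2,3) by (meson order_trans)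
    with uv show "(\<Sum>i<n. \<bar>f (v i) - f (u i)\<bar>) < \<epsilon>"
      by (intro \<delta>) auto
  qed fact
qed

lemma lipschitz_on_imp_absolutely_continuous_on:
  assumes "L-lipschitz_on {a..b} g"
  shows "absolutely_continuous_on a b g"
  unfolding absolutely_continuous_on_def
proof (intro allI impI)
  fix \<epsilon> :: real
  assume "\<epsilon> > 0"
  have L: "L \<ge> 0" and Lg: "\<And>x y. x \<in> {a..b} \<Longrightarrow> y \<in> {a..b} \<Longrightarrow> \<bar>g y - g x\<bar> \<le> L * \<bar>y - x\<bar>"
    using assms by (auto simp: lipschitz_on_def dist_real_def)
  show "\<exists>\<delta>>0. \<forall>(n::nat) u v. (\<forall>i<n. a \<le> u i \<and> u i \<le> v i \<and> v i \<le> b) \<and>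
      (\<forall>i<n. \<forall>j<n. i \<noteq> j \<longrightarrow> {u i<..<v i} \<inter> {u j<..<v j} = {}) \<and>
      (\<Sum>i<n. v i - u i) < \<delta> \<longrightarrow> (\<Sum>i<n. \<bar>g (v i) - g (u i)\<bar>) < \<epsilon>"
  proof (intro exI[of _ "\<epsilon> / (L + 1)"] conjI allI impI)
    fix n :: nat and u v :: "nat \<Rightarrow> real"
    assume uv: "(\<forall>i<n. a \<le> u i \<and> u i \<le> v i \<and> v i \<le> b) \<and>
      (\<forall>i<n. \<forall>j<n. i \<noteq> j \<longrightarrow> {u i<..<v i} \<inter> {u j<..<v j} = {}) \<and>
      (\<Sum>i<n. v i - u i) < \<epsilon> / (L + 1)"
    have "(\<Sum>i<n. \<bar>g (v i) - g (u i)\<bar>) \<le> (\<Sum>i<n. (L + 1) * (v i - u i))"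
    proof (rule sum_mono)
      fix i
      assume "i \<in> {..<n}"
      then have "u i \<in> {a..b}" "v i \<in> {a..b}" "u i \<le> v i"
        using uv by auto
      then have "\<bar>g (v i) - g (u i)\<bar> \<le> L * (v i - u i)"
        using Lg[of "u i" "v i"] by simp
      also have "\<dots> \<le> (L + 1) * (v i - u i)"
        using \<open>u i \<le> v i\<close> by (simp add: mult_right_mono)
      finally show "\<bar>g (v i) - g (u i)\<bar> \<le> (L + 1) * (v i - u i)" .
    qed
    also have "\<dots> < (L + 1) * (\<epsilon> / (L + 1))"
      unfolding sum_distrib_left[symmetric] using uv L by (intro mult_strict_left_mono) auto
    finally show "(\<Sum>i<n. \<bar>g (v i) - g (u i)\<bar>) < \<epsilon>"
      using L by simp
  qed (use \<open>\<epsilon> > 0\<close> L in auto)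
qed

lemma absolutely_continuous_on_mult:
  fixes f g :: "real \<Rightarrow> real"
  assumes f: "absolutely_continuous_on a b f" and g: "absolutely_continuous_on a b g"
  shows "absolutely_continuous_on a b (\<lambda>t. f t * g t)"
  unfolding absolutely_continuous_on_def
proof (intro allI impI)
  fix \<epsilon> :: real
  assume "\<epsilon> > 0"
  have "bounded (f ` {a..b})" "bounded (g ` {a..b})"
    using f g by (auto intro!: compact_imp_bounded compact_continuous_image
        absolutely_continuous_on_imp_continuous_on)
  then obtain F G where "F > 0" "G > 0"
    and F: "\<And>t. t \<in> {a..b} \<Longrightarrow> \<bar>f t\<bar> \<le> F" and G: "\<And>t. t \<in> {a..b} \<Longrightarrow> \<bar>g t\<bar> \<le> G"
    unfolding bounded_pos by auto
  obtain \<delta>f where "\<delta>f > 0" and \<delta>f: "\<And>(n::nat) u v. \<lbrakk>\<forall>i<n. a \<le> u i \<and> u i \<le> v i \<and> v i \<le> b;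
      \<forall>i<n. \<forall>j<n. i \<noteq> j \<longrightarrow> {u i<..<v i} \<inter> {u j<..<v j} = {};
      (\<Sum>i<n. v i - u i) < \<delta>f\<rbrakk> \<Longrightarrow> (\<Sum>i<n. \<bar>f (v i) - f (u i)\<bar>) < \<epsilon> / (2 * G)"
    using absolutely_continuous_onE[OF f, of "\<epsilon> / (2 * G)"] \<open>\<epsilon> > 0\<close> \<open>G > 0\<close>
    by (simp only: zero_less_divide_iff zero_less_mult_iff zero_less_numeral) blast
  obtain \<delta>g where "\<delta>g > 0" and \<delta>g: "\<And>(n::nat) u v. \<lbrakk>\<forall>i<n. a \<le> u i \<and> u i \<le> v i \<and> v i \<le> b;
      \<forall>i<n. \<forall>j<n. i \<noteq> j \<longrightarrow> {u i<..<v i} \<inter> {u j<..<v j} = {};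
      (\<Sum>i<n. v i - u i) < \<delta>g\<rbrakk> \<Longrightarrow> (\<Sum>i<n. \<bar>g (v i) - g (u i)\<bar>) < \<epsilon> / (2 * F)"
    using absolutely_continuous_onE[OF g, of "\<epsilon> / (2 * F)"] \<open>\<epsilon> > 0\<close> \<open>F > 0\<close>
    by (simp only: zero_less_divide_iff zero_less_mult_iff zero_less_numeral) blast
  show "\<exists>\<delta>>0. \<forall>(n::nat) u v. (\<forall>i<n. a \<le> u i \<and> u i \<le> v i \<and> v i \<le> b) \<and>
      (\<forall>i<n. \<forall>j<n. i \<noteq> j \<longrightarrow> {u i<..<v i} \<inter> {u j<..<v j} = {}) \<and>
      (\<Sum>i<n. v i - u i) < \<delta> \<longrightarrow> (\<Sum>i<n. \<bar>f (v i) * g (v i) - f (u i) * g (u i)\<bar>) < \<epsilon>"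
  proof (intro exI[of _ "min \<delta>f \<delta>g"] conjI allI impI)
    fix n :: nat and u v :: "nat \<Rightarrow> real"
    assume uv: "(\<forall>i<n. a \<le> u i \<and> u i \<le> v i \<and> v i \<le> b) \<and>
      (\<forall>i<n. \<forall>j<n. i \<noteq> j \<longrightarrow> {u i<..<v i} \<inter> {u j<..<v j} = {}) \<and>
      (\<Sum>i<n. v i - u i) < min \<delta>f \<delta>g"
    have "(\<Sum>i<n. \<bar>f (v i) * g (v i) - f (u i) * g (u i)\<bar>)
        \<le> (\<Sum>i<n. F * \<bar>g (v i) - g (u i)\<bar> + G * \<bar>f (v i) - f (u i)\<bar>)"
    proof (rule sum_mono)
      fix i
      assume "i \<in> {..<n}"
      then have "\<bar>f (v i)\<bar> \<le> F" "\<bar>g (u i)\<bar> \<le> G"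
        using uv F G by auto
      have "f (v i) * g (v i) - f (u i) * g (u i)
          = f (v i) * (g (v i) - g (u i)) + g (u i) * (f (v i) - f (u i))"
        by (simp add: algebra_simps)
      also have "\<bar>\<dots>\<bar> \<le> F * \<bar>g (v i) - g (u i)\<bar> + G * \<bar>f (v i) - f (u i)\<bar>"
        using \<open>\<bar>f (v i)\<bar> \<le> F\<close> \<open>\<bar>g (u i)\<bar> \<le> G\<close>
        by (intro order_trans[OF abs_triangle_ineq] add_mono) (auto simp: abs_mult intro: mult_right_mono)
      finally show "\<bar>f (v i) * g (v i) - f (u i) * g (u i)\<bar>
          \<le> F * \<bar>g (v i) - g (u i)\<bar> + G * \<bar>f (v i) - f (u i)\<bar>" .
    qed
    also have "\<dots> = F * (\<Sum>i<n. \<bar>g (v i) - g (u i)\<bar>) + G * (\<Sum>i<n. \<bar>f (v i) - f (u i)\<bar>)"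
      by (simp add: sum.distrib sum_distrib_left)
    also have "\<dots> < F * (\<epsilon> / (2 * F)) + G * (\<epsilon> / (2 * G))"
      using uv \<open>F > 0\<close> \<open>G > 0\<close>
      by (intro add_strict_mono mult_strict_left_mono \<delta>f \<delta>g) auto
    also have "\<dots> = \<epsilon>"
      using \<open>F > 0\<close> \<open>G > 0\<close> by simp
    finally show "(\<Sum>i<n. \<bar>f (v i) * g (v i) - f (u i) * g (u i)\<bar>) < \<epsilon>" .
  qed (use \<open>\<delta>f > 0\<close> \<open>\<delta>g > 0\<close> in auto)
qed

lemma tagged_partial_division_of_real_interval:
  fixes a b :: real
  assumes "q tagged_partial_division_of {a..b}" and "(x, K) \<in> q"
  shows "K = {Inf K..Sup K}" and "a \<le> Inf K" and "Inf K \<le> x" and "x \<le> Sup K" and "Sup K \<le> b"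
proof -
  obtain u v where "K = {u..v}"
    using tagged_partial_division_ofD(4)[OF assms] by (metis box_real(2))
  moreover have "x \<in> K" "K \<subseteq> {a..b}"
    using tagged_partial_division_ofD(2,3)[OF assms] by auto
  ultimately show "K = {Inf K..Sup K}" "a \<le> Inf K" "Inf K \<le> x" "x \<le> Sup K" "Sup K \<le> b"
    by auto
qed

lemma absolutely_continuous_on_tagged_partial_division:
  assumes "absolutely_continuous_on a b f" and "\<epsilon> > 0"
  obtains \<delta> where "\<delta> > 0"
    and "\<And>q. \<lbrakk>q tagged_partial_division_of {a..b}; (\<Sum>(x, K)\<in>q. measure lborel K) < \<delta>\<rbrakk>
              \<Longrightarrow> (\<Sum>(x, K)\<in>q. \<bar>f (Sup K) - f (Inf K)\<bar>) < \<epsilon>"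
proof -
  obtain \<delta> where "\<delta> > 0" and \<delta>: "\<And>(n::nat) u v. \<lbrakk>\<forall>i<n. a \<le> u i \<and> u i \<le> v i \<and> v i \<le> b;
      \<forall>i<n. \<forall>j<n. i \<noteq> j \<longrightarrow> {u i<..<v i} \<inter> {u j<..<v j} = {};
      (\<Sum>i<n. v i - u i) < \<delta>\<rbrakk> \<Longrightarrow> (\<Sum>i<n. \<bar>f (v i) - f (u i)\<bar>) < \<epsilon>"
    using absolutely_continuous_onE[OF assms] by blast
  have "(\<Sum>(x, K)\<in>q. \<bar>f (Sup K) - f (Inf K)\<bar>) < \<epsilon>"
    if q: "q tagged_partial_division_of {a..b}" and small: "(\<Sum>(x, K)\<in>q. measure lborel K) < \<delta>" for q
  proof -
    obtain \<phi> where \<phi>: "bij_betw \<phi> {..<card q} q"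
      using ex_bij_betw_nat_finite[OF tagged_partial_division_ofD(1)[OF q]]
      by (auto simp: atLeast0LessThan)
    define u where "u i = Inf (snd (\<phi> i))" for i
    define v where "v i = Sup (snd (\<phi> i))" for i
    have \<phi>q: "\<phi> i \<in> q" if "i < card q" for i
      using \<phi> that by (auto simp: bij_betw_def)
    have K: "snd (\<phi> i) = {u i..v i}" "a \<le> u i" "u i \<le> v i" "v i \<le> b" if "i < card q" for i
      using tagged_partial_division_of_real_interval[OF q, of "fst (\<phi> i)" "snd (\<phi> i)"] \<phi>q[OF that]
      by (auto simp: u_def v_def)
    have reindex: "(\<Sum>(x, K)\<in>q. h K) = (\<Sum>i<card q. h (snd (\<phi> i)))" for h :: "real set \<Rightarrow> real"
      using sum.reindex_bij_betw[OF \<phi>, of "\<lambda>(x, K). h K"] by (simp add: case_prod_beta)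
    have "{u i<..<v i} \<inter> {u j<..<v j} = {}" if "i < card q" "j < card q" "i \<noteq> j" for i j
    proof -
      have "\<phi> i \<noteq> \<phi> j"
        using \<phi> that by (auto simp: bij_betw_def inj_on_def)
      then have "interior (snd (\<phi> i)) \<inter> interior (snd (\<phi> j)) = {}"
        using tagged_partial_division_ofD(5)[OF q, of "fst (\<phi> i)" "snd (\<phi> i)" "fst (\<phi> j)" "snd (\<phi> j)"]
          \<phi>q that by simp
      then show ?thesis
        using K that by simp
    qed
    moreover have "(\<Sum>i<card q. v i - u i) < \<delta>"
      using small K by (simp add: reindex)
    ultimately have "(\<Sum>i<card q. \<bar>f (v i) - f (u i)\<bar>) < \<epsilon>"
      using K by (intro \<delta>) auto
    then show ?thesis
      by (simp add: reindex u_def v_def)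
  qed
  with \<open>\<delta> > 0\<close> show thesis
    by (rule that)
qed

lemma abs_increment_sub_linear_le:
  fixes f :: "real \<Rightarrow> real"
  assumes "x \<in> {u..v}" and "\<And>y. y \<in> {u..v} \<Longrightarrow> \<bar>f y - f x - (y - x) * D\<bar> \<le> \<eta> * \<bar>y - x\<bar>"
  shows "\<bar>(v - u) * D - (f v - f u)\<bar> \<le> \<eta> * (v - u)"
proof -
  have "(v - u) * D - (f v - f u) = (f u - f x - (u - x) * D) - (f v - f x - (v - x) * D)"
    by (simp add: algebra_simps)
  also have "\<bar>\<dots>\<bar> \<le> \<eta> * \<bar>u - x\<bar> + \<eta> * \<bar>v - x\<bar>"
    using assms(1) by (intro order_trans[OF abs_triangle_ineq4] add_mono assms(2)) auto
  also have "\<dots> = \<eta> * (v - u)"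
    using assms(1) by (simp add: algebra_simps)
  finally show ?thesis .
qed

lemma tagged_division_derivative_error_le:
  fixes f f' :: "real \<Rightarrow> real"
  assumes p: "p tagged_division_of {a..b}" and "a \<le> b" and "q \<subseteq> p" and "\<eta> \<ge> 0"
    and approx: "\<And>x K y. \<lbrakk>(x, K) \<in> q; y \<in> K\<rbrakk> \<Longrightarrow> \<bar>f y - f x - (y - x) * f' x\<bar> \<le> \<eta> * \<bar>y - x\<bar>"
  shows "\<bar>\<Sum>(x, K)\<in>q. measure lborel K * f' x - (f (Sup K) - f (Inf K))\<bar> \<le> \<eta> * (b - a)"
proof -
  have "\<bar>\<Sum>(x, K)\<in>q. measure lborel K * f' x - (f (Sup K) - f (Inf K))\<bar>
      \<le> (\<Sum>(x, K)\<in>q. \<eta> * measure lborel K)"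
  proof (rule order_trans[OF sum_abs sum_mono], clarify)
    fix x K
    assume "(x, K) \<in> q"
    then have "(x, K) \<in> p"
      using \<open>q \<subseteq> p\<close> by blast
    moreover have "p tagged_partial_division_of {a..b}"
      using p by (simp add: tagged_division_of_def)
    ultimately have K: "K = {Inf K..Sup K}" "Inf K \<le> x" "x \<le> Sup K"
      by (simp_all add: tagged_partial_division_of_real_interval)
    then have "\<bar>(Sup K - Inf K) * f' x - (f (Sup K) - f (Inf K))\<bar> \<le> \<eta> * (Sup K - Inf K)"
      using approx[OF \<open>(x, K) \<in> q\<close>] by (intro abs_increment_sub_linear_le) auto
    moreover have "measure lborel K = Sup K - Inf K"
      using K by (metis content_real order_trans)
    ultimately show "\<bar>measure lborel K * f' x - (f (Sup K) - f (Inf K))\<bar> \<le> \<eta> * measure lborel K"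
      by (simp add: mult.commute)
  qed
  also have "\<dots> \<le> (\<Sum>(x, K)\<in>p. \<eta> * measure lborel K)"
    using p \<open>q \<subseteq> p\<close> \<open>\<eta> \<ge> 0\<close> by (intro sum_mono2) auto
  also have "\<dots> = \<eta> * (b - a)"
    using additive_content_tagged_division[of p a b] p \<open>a \<le> b\<close>
    by (simp add: sum_distrib_left[symmetric] split_def)
  finally show ?thesis .
qed

lemma has_real_derivative_approximation:
  fixes f :: "real \<Rightarrow> real"
  assumes "(f has_real_derivative D) (at x)" and "\<eta> > 0"
  obtains d where "d > 0" and "\<And>y. \<bar>y - x\<bar> < d \<Longrightarrow> \<bar>f y - f x - (y - x) * D\<bar> \<le> \<eta> * \<bar>y - x\<bar>"
proof -
  have "(f has_derivative (\<lambda>y. y * D)) (at x)"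
    using assms(1) by (simp add: has_field_derivative_def mult_commute_abs)
  then obtain d where "d > 0" and "\<forall>y. \<bar>y - x\<bar> < d \<longrightarrow> \<bar>f y - f x - (y - x) * D\<bar> \<le> \<eta> * \<bar>y - x\<bar>"
    using assms(2) unfolding has_derivative_within_alt by (auto simp: mult.commute)
  then show thesis
    using that by blast
qed

lemma negligible_tags_small_length:
  fixes N :: "real set"
  assumes "negligible N" and "\<delta> > 0"
  obtains \<gamma> where "gauge \<gamma>"
    and "\<And>p. \<lbrakk>p tagged_division_of {a..b}; \<gamma> fine p\<rbrakk>
           \<Longrightarrow> (\<Sum>(x, K)\<in>{(x, K) \<in> p. x \<in> N}. measure lborel K) < \<delta>"
proof -
  have "(indicator N has_integral (0::real)) {a..b}"
    using assms(1) unfolding negligible_def by (metis box_real(2))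
  then obtain \<gamma> where "gauge \<gamma>" and \<gamma>: "\<forall>p. p tagged_division_of {a..b} \<and> \<gamma> fine p
      \<longrightarrow> norm ((\<Sum>(x, K)\<in>p. measure lborel K *\<^sub>R (indicator N x :: real)) - 0) < \<delta>"
    using assms(2) unfolding has_integral_real by meson
  have "(\<Sum>(x, K)\<in>{(x, K) \<in> p. x \<in> N}. measure lborel K) < \<delta>"
    if "p tagged_division_of {a..b}" and "\<gamma> fine p" for p
  proof -
    have "(\<Sum>(x, K)\<in>{(x, K) \<in> p. x \<in> N}. measure lborel K)
        = (\<Sum>(x, K)\<in>p. measure lborel K * (indicator N x :: real))"
      using that(1) by (intro sum.mono_neutral_cong_left) auto
    then show ?thesis
      using \<gamma> that by (simp add: abs_less_iff)
  qed
  with \<open>gauge \<gamma>\<close> show thesis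
    by (rule that)
qed

lemma fundamental_theorem_of_calculus_absolutely_continuous:
  fixes f f' :: "real \<Rightarrow> real"
  assumes "a \<le> b" and ac: "absolutely_continuous_on a b f" and N: "negligible N"
    and deriv: "\<And>t. t \<in> {a..b} - N \<Longrightarrow> (f has_real_derivative f' t) (at t)"
  shows "(f' has_integral (f b - f a)) {a..b}"
proof -
  define g where "g t = (if t \<in> N then 0 else f' t)" for t
  have "(g has_integral (f b - f a)) {a..b}"
    unfolding has_integral_real
  proof (intro allI impI)
    fix \<epsilon> :: real
    assume "\<epsilon> > 0"
    then obtain \<delta> where "\<delta> > 0" and small_variation: "\<And>q. \<lbrakk>q tagged_partial_division_of {a..b};
        (\<Sum>(x, K)\<in>q. measure lborel K) < \<delta>\<rbrakk> \<Longrightarrow> (\<Sum>(x, K)\<in>q. \<bar>f (Sup K) - f (Inf K)\<bar>) < \<epsilon> / 2"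
      using absolutely_continuous_on_tagged_partial_division[OF ac, of "\<epsilon> / 2"] by auto
    obtain \<gamma>N where "gauge \<gamma>N" and \<gamma>N: "\<And>p. \<lbrakk>p tagged_division_of {a..b}; \<gamma>N fine p\<rbrakk>
        \<Longrightarrow> (\<Sum>(x, K)\<in>{(x, K) \<in> p. x \<in> N}. measure lborel K) < \<delta>"
      using negligible_tags_small_length[OF N \<open>\<delta> > 0\<close>] by blast
    define \<eta> where "\<eta> = \<epsilon> / (2 * (b - a + 1))"
    have "\<eta> > 0"
      using \<open>\<epsilon> > 0\<close> \<open>a \<le> b\<close> by (simp add: \<eta>_def)
    have "\<exists>d>0. t \<in> {a..b} - N \<longrightarrow> (\<forall>y. \<bar>y - t\<bar> < d \<longrightarrow> \<bar>f y - f t - (y - t) * f' t\<bar> \<le> \<eta> * \<bar>y - t\<bar>)"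
      for t
      using has_real_derivative_approximation[OF deriv \<open>\<eta> > 0\<close>, of t] by (metis zero_less_one)
    then obtain d where "\<And>t. d t > 0" and d: "\<And>t y. \<lbrakk>t \<in> {a..b} - N; \<bar>y - t\<bar> < d t\<rbrakk>
        \<Longrightarrow> \<bar>f y - f t - (y - t) * f' t\<bar> \<le> \<eta> * \<bar>y - t\<bar>"
      by metis
    show "\<exists>\<gamma>. gauge \<gamma> \<and> (\<forall>p. p tagged_division_of {a..b} \<and> \<gamma> fine p \<longrightarrow>
        norm ((\<Sum>(x, K)\<in>p. measure lborel K *\<^sub>R g x) - (f b - f a)) < \<epsilon>)"
    proof (intro exI[of _ "\<lambda>t. \<gamma>N t \<inter> ball t (d t)"] conjI allI impI)
      show "gauge (\<lambda>t. \<gamma>N t \<inter> ball t (d t))"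
        using \<open>gauge \<gamma>N\<close> \<open>\<And>t. d t > 0\<close> by (auto simp: gauge_ball_dependent)
    next
      fix p
      assume "p tagged_division_of {a..b} \<and> (\<lambda>t. \<gamma>N t \<inter> ball t (d t)) fine p"
      then have p: "p tagged_division_of {a..b}" and "\<gamma>N fine p"
        and fine: "(\<lambda>t. ball t (d t)) fine p"
        by (auto simp: fine_Int)
      define err where "err = (\<lambda>(x, K). measure lborel K * g x - (f (Sup K) - f (Inf K)))"
      define bad where "bad = {(x, K) \<in> p. x \<in> N}"
      have "(\<Sum>(x, K)\<in>p. measure lborel K *\<^sub>R g x) - (f b - f a) = sum err p"
        using additive_tagged_division_1[OF \<open>a \<le> b\<close> p, of f]
        by (simp add: err_def sum_subtractf split_def)
      also have "\<dots> = sum err (p - bad) + sum err bad"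
        using p by (intro sum.subset_diff) (auto simp: bad_def)
      finally have split: "(\<Sum>(x, K)\<in>p. measure lborel K *\<^sub>R g x) - (f b - f a)
          = sum err (p - bad) + sum err bad" .
      have "\<bar>\<Sum>(x, K)\<in>p - bad. measure lborel K * f' x - (f (Sup K) - f (Inf K))\<bar> \<le> \<eta> * (b - a)"
      proof (rule tagged_division_derivative_error_le[OF p \<open>a \<le> b\<close> _ less_imp_le[OF \<open>\<eta> > 0\<close>]])
        fix x K y
        assume "(x, K) \<in> p - bad" and "y \<in> K"
        moreover have "K \<subseteq> ball x (d x)" "x \<in> {a..b}"
          using fine tagged_division_ofD(2,3)[OF p, of x K] \<open>(x, K) \<in> p - bad\<close>
          by (auto simp: fine_def)
        ultimately show "\<bar>f y - f x - (y - x) * f' x\<bar> \<le> \<eta> * \<bar>y - x\<bar>"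
          using d[of x y] by (auto simp: bad_def dist_real_def abs_minus_commute)
      qed auto
      also have "\<eta> * (b - a) < \<epsilon> / 2"
        using \<open>\<epsilon> > 0\<close> \<open>a \<le> b\<close> by (simp add: \<eta>_def field_simps)
      finally have "\<bar>sum err (p - bad)\<bar> < \<epsilon> / 2"
        by (simp add: err_def g_def bad_def split_def)
      moreover have "(\<Sum>(x, K)\<in>bad. \<bar>f (Sup K) - f (Inf K)\<bar>) < \<epsilon> / 2"
        using \<gamma>N[OF p \<open>\<gamma>N fine p\<close>] p tagged_partial_division_subset[of p "{a..b}" bad]
        by (intro small_variation) (auto simp: bad_def tagged_division_of_def)
      moreover have "\<bar>sum err bad\<bar> \<le> (\<Sum>(x, K)\<in>bad. \<bar>f (Sup K) - f (Inf K)\<bar>)"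
        by (rule order_trans[OF sum_abs]) (auto simp: err_def g_def bad_def intro: sum_mono)
      ultimately show "norm ((\<Sum>(x, K)\<in>p. measure lborel K *\<^sub>R g x) - (f b - f a)) < \<epsilon>"
        using split by simp
    qed
  qed
  then show ?thesis
    by (rule has_integral_spike[OF N, rotated]) (simp add: g_def)
qed

lemma has_integral_shifted_mult_derivative:
  fixes f f' :: "real \<Rightarrow> real"
  assumes "c \<le> d" and ac: "absolutely_continuous_on c d f" and N: "negligible N"
    and deriv: "\<And>t. t \<in> {c..d} - N \<Longrightarrow> (f has_real_derivative f' t) (at t)"
  shows "((\<lambda>t. (t - k) * f' t) has_integral ((d - k) * f d - (c - k) * f c - integral {c..d} f)) {c..d}"
proof -
  have "1-lipschitz_on {c..d} (\<lambda>t. t - k)"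
    by (rule lipschitz_onI) (auto simp: dist_real_def)
  then have weighted_ac: "absolutely_continuous_on c d (\<lambda>t. (t - k) * f t)"
    using absolutely_continuous_on_mult[OF lipschitz_on_imp_absolutely_continuous_on ac] by blast
  have weighted_deriv: "((\<lambda>t. (t - k) * f t) has_real_derivative f t + (t - k) * f' t) (at t)"
    if "t \<in> {c..d} - N" for t
    using deriv[OF that] by (auto intro!: derivative_eq_intros)
  have "((\<lambda>t. f t + (t - k) * f' t) has_integral ((d - k) * f d - (c - k) * f c)) {c..d}"
    using fundamental_theorem_of_calculus_absolutely_continuous[OF \<open>c \<le> d\<close> weighted_ac N weighted_deriv]
    by simp
  moreover have "(f has_integral integral {c..d} f) {c..d}"
    using ac by (intro integrable_integral integrable_continuous_real
        absolutely_continuous_on_imp_continuous_on)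
  ultimately have "((\<lambda>t. f t + (t - k) * f' t - f t)
      has_integral ((d - k) * f d - (c - k) * f c - integral {c..d} f)) {c..d}"
    by (rule has_integral_diff)
  then show ?thesis
    by simp
qed

lemma has_integral_shifted_square:
  fixes c d k :: real
  assumes "c \<le> d"
  shows "((\<lambda>t. (t - k)\<^sup>2) has_integral ((d - k) ^ 3 - (c - k) ^ 3) / 3) {c..d}"
proof -
  have "((\<lambda>t. (t - k) ^ 3 / 3) has_real_derivative (t - k)\<^sup>2) (at t within {c..d})" for t
    by (auto intro!: derivative_eq_intros simp: power2_eq_square)
  then show ?thesis
    using fundamental_theorem_of_calculus[OF assms, of "\<lambda>t. (t - k) ^ 3 / 3"]
    by (simp add: has_real_derivative_iff_has_vector_derivative diff_divide_distrib)
qed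

lemma has_integral_mult_abs_le_am_gm:
  fixes w D :: "real \<Rightarrow> real"
  assumes "s > 0"
    and J: "((\<lambda>t. w t * D t) has_integral J) S"
    and W: "((\<lambda>t. (w t)\<^sup>2) has_integral W) S"
    and D2: "(\<lambda>t. (D t)\<^sup>2) integrable_on S"
  shows "\<bar>J\<bar> \<le> s / 2 * W + integral S (\<lambda>t. (D t)\<^sup>2) / (2 * s)"
proof -
  have bound: "((\<lambda>t. s / 2 * (w t)\<^sup>2 + (D t)\<^sup>2 / (2 * s))
      has_integral (s / 2 * W + integral S (\<lambda>t. (D t)\<^sup>2) / (2 * s))) S"
    using has_integral_add[OF has_integral_mult_right[OF W] has_integral_divide[OF integrable_integral[OF D2]]] .
  have "\<bar>w t * D t\<bar> \<le> s / 2 * (w t)\<^sup>2 + (D t)\<^sup>2 / (2 * s)" for t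
  proof -
    have "0 \<le> (s * \<bar>w t\<bar> - \<bar>D t\<bar>)\<^sup>2"
      by simp
    then have "2 * s * \<bar>w t * D t\<bar> \<le> s\<^sup>2 * (w t)\<^sup>2 + (D t)\<^sup>2"
      by (simp add: power2_eq_square abs_mult algebra_simps)
    then show ?thesis
      using \<open>s > 0\<close> by (simp add: field_simps power2_eq_square)
  qed
  then have "J \<le> s / 2 * W + integral S (\<lambda>t. (D t)\<^sup>2) / (2 * s)"
    and "- J \<le> s / 2 * W + integral S (\<lambda>t. (D t)\<^sup>2) / (2 * s)"
    using has_integral_le[OF J bound] has_integral_le[OF has_integral_neg[OF J] bound]
    by (meson abs_le_D1 abs_le_D2)+
  then show ?thesis
    by linarith
qed

lemma le_sqrt_mult_of_am_gm:
  fixes X B C :: real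
  assumes am_gm: "\<And>s. s > 0 \<Longrightarrow> X \<le> s / 2 * C + B / (2 * s)" and "B \<ge> 0" and "C \<ge> 0"
  shows "X \<le> sqrt (C * B)"
proof (cases "B > 0 \<and> C > 0")
  case True
  then have "X \<le> sqrt B / sqrt C / 2 * C + B / (2 * (sqrt B / sqrt C))"
    by (intro am_gm) simp
  also have "\<dots> = sqrt (C * B)"
    using True by (simp add: field_simps real_sqrt_mult)
  finally show ?thesis .
next
  case False
  \<comment> \<open>One of the two terms can then be made arbitrarily small, so \<open>X \<le> 0\<close>.\<close>
  show ?thesis
  proof (rule ccontr)
    assume "\<not> X \<le> sqrt (C * B)"
    from False consider "B = 0" | "C = 0"
      using \<open>B \<ge> 0\<close> \<open>C \<ge> 0\<close> by linarith
    moreover from calculation have "X > 0"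
      using \<open>\<not> X \<le> sqrt (C * B)\<close> by cases auto
    ultimately show False
    proof cases
      case 1
      have "X \<le> X / (C + 1) / 2 * C"
        using am_gm[of "X / (C + 1)"] \<open>X > 0\<close> \<open>C \<ge> 0\<close> 1 by simp
      also have "\<dots> < X"
        using \<open>X > 0\<close> \<open>C \<ge> 0\<close> by (simp add: field_simps) (smt (verit) mult_nonneg_nonneg)
      finally show False
        by simp
    next
      case 2
      have "X \<le> B / (2 * ((B + 1) / X))"
        using am_gm[of "(B + 1) / X"] \<open>X > 0\<close> \<open>B \<ge> 0\<close> 2 by simp
      also have "\<dots> < X"
        using \<open>X > 0\<close> \<open>B \<ge> 0\<close> by (simp add: field_simps) (smt (verit) mult_nonneg_nonneg)
      finally show False
        by simp
    qed
  qed
qed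

lemma abs_two_point_deviation_le:
  fixes f f' :: "real \<Rightarrow> real"
  assumes "a \<le> x" and "x \<le> y" and "y \<le> b"
    and ac: "absolutely_continuous_on a b f" and N: "negligible N"
    and deriv: "\<And>t. t \<in> {a..b} - N \<Longrightarrow> (f has_real_derivative f' t) (at t)"
    and square_integrable: "(\<lambda>t. (f' t)\<^sup>2) integrable_on {a..b}"
  shows "\<bar>(c - a) * f x + (b - c) * f y - integral {a..b} f\<bar>
    \<le> sqrt (((x - a) ^ 3 + (y - c) ^ 3 - (x - c) ^ 3 + (b - y) ^ 3) / 3 * integral {a..b} (\<lambda>t. (f' t)\<^sup>2))"
proof -
  define B where "B u v = integral {u..v} (\<lambda>t. (f' t)\<^sup>2)" for u v
  have piece: "\<bar>(v - k) * f v - (u - k) * f u - integral {u..v} f\<bar>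
      \<le> s / 2 * (((v - k) ^ 3 - (u - k) ^ 3) / 3) + B u v / (2 * s)"
    if "a \<le> u" "u \<le> v" "v \<le> b" "s > 0" for u v k s
    unfolding B_def
  proof (rule has_integral_mult_abs_le_am_gm[where w="\<lambda>t. t - k" and D=f'])
    show "((\<lambda>t. (t - k) * f' t) has_integral ((v - k) * f v - (u - k) * f u - integral {u..v} f)) {u..v}"
      using that deriv
      by (intro has_integral_shifted_mult_derivative[OF _ _ N] absolutely_continuous_on_subinterval[OF ac]) auto
    show "(\<lambda>t. (f' t)\<^sup>2) integrable_on {u..v}"
      using that by (intro integrable_on_subinterval[OF square_integrable]) auto
  qed (use that in \<open>auto intro: has_integral_shifted_square\<close>)
  have f_integrable: "f integrable_on {a..b}"
    using ac by (intro integrable_continuous_real absolutely_continuous_on_imp_continuous_on)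
  have split_f: "integral {a..b} f = integral {a..x} f + integral {x..y} f + integral {y..b} f"
    using Henstock_Kurzweil_Integration.integral_combine[of a x b f]
      Henstock_Kurzweil_Integration.integral_combine[of x y b f]
      assms(1-3) f_integrable integrable_on_subinterval[OF f_integrable, of x b]
    by simp
  have split_B: "B a b = B a x + B x y + B y b"
    using Henstock_Kurzweil_Integration.integral_combine[of a x b "\<lambda>t. (f' t)\<^sup>2"]
      Henstock_Kurzweil_Integration.integral_combine[of x y b "\<lambda>t. (f' t)\<^sup>2"]
      assms(1-3) square_integrable integrable_on_subinterval[OF square_integrable, of x b]
    by (simp add: B_def)
  define C where "C = ((x - a) ^ 3 + (y - c) ^ 3 - (x - c) ^ 3 + (b - y) ^ 3) / 3"
  have "\<bar>(c - a) * f x + (b - c) * f y - integral {a..b} f\<bar> \<le> s / 2 * C + B a b / (2 * s)"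
    if "s > 0" for s
  proof -
    have "(c - a) * f x + (b - c) * f y - integral {a..b} f
        = ((x - a) * f x - (a - a) * f a - integral {a..x} f)
          + ((y - c) * f y - (x - c) * f x - integral {x..y} f)
          + ((b - b) * f b - (y - b) * f y - integral {y..b} f)"
      using split_f by (simp add: algebra_simps)
    also have "\<bar>\<dots>\<bar> \<le> (s / 2 * (((x - a) ^ 3 - (a - a) ^ 3) / 3) + B a x / (2 * s))
        + (s / 2 * (((y - c) ^ 3 - (x - c) ^ 3) / 3) + B x y / (2 * s))
        + (s / 2 * (((b - b) ^ 3 - (y - b) ^ 3) / 3) + B y b / (2 * s))"
      using piece[OF order_refl \<open>a \<le> x\<close> _ that, of a] piece[OF \<open>a \<le> x\<close> \<open>x \<le> y\<close> \<open>y \<le> b\<close> that, of c]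
        piece[OF _ \<open>y \<le> b\<close> order_refl that, of b] assms(1-3)
      by (simp only: abs_le_iff) linarith
    also have "\<dots> = s / 2 * C + B a b / (2 * s)"
      unfolding split_B C_def using that by (simp add: field_simps power3_eq_cube)
    finally show ?thesis .
  qed
  moreover have "B a b \<ge> 0"
    unfolding B_def by (intro integral_nonneg square_integrable) simp
  moreover have "C \<ge> 0"
  proof -
    have "(x - a) ^ 3 \<ge> 0" "(b - y) ^ 3 \<ge> 0" "(x - c) ^ 3 \<le> (y - c) ^ 3"
      using assms(1-3) by (simp_all add: power_mono_odd)
    then show ?thesis
      unfolding C_def by (intro divide_nonneg_pos) (linarith, simp)
  qed
  ultimately show ?thesis
    unfolding B_def C_def by (rule le_sqrt_mult_of_am_gm)
qed

lemma abs_deviation_from_mean_symmetric_le: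
  fixes f f' :: "real \<Rightarrow> real"
  assumes "a < b" and ac: "absolutely_continuous_on a b f" and N: "negligible N"
    and deriv: "\<And>t. t \<in> {a..b} - N \<Longrightarrow> (f has_real_derivative f' t) (at t)"
    and square_integrable: "(\<lambda>t. (f' t)\<^sup>2) integrable_on {a..b}"
    and symmetric: "f (a + b - x) = f x" and x: "x \<in> {a..(a + b) / 2}"
  shows "\<bar>f x - integral {a..b} f / (b - a)\<bar>
    \<le> (b - a) powr (-1/2) * sqrt ((b - a)\<^sup>2 / 48 + (x - (3 * a + b) / 4)\<^sup>2)
       * sqrt (integral {a..b} (\<lambda>t. (f' t)\<^sup>2))"
proof -
  define m where "m = (a + b) / 2"
  define W where "W = (b - a)\<^sup>2 / 48 + (x - (3 * a + b) / 4)\<^sup>2"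
  define B where "B = integral {a..b} (\<lambda>t. (f' t)\<^sup>2)"
  have "(m - a) * f x + (b - m) * f (a + b - x) = (b - a) * f x"
    using symmetric by (simp add: m_def field_simps)
  moreover have "((x - a) ^ 3 + (a + b - x - m) ^ 3 - (x - m) ^ 3 + (b - (a + b - x)) ^ 3) / 3
      = (b - a) * W"
    by (simp add: m_def W_def power3_eq_cube power2_eq_square field_simps)
  moreover have "\<bar>(m - a) * f x + (b - m) * f (a + b - x) - integral {a..b} f\<bar>
      \<le> sqrt (((x - a) ^ 3 + (a + b - x - m) ^ 3 - (x - m) ^ 3 + (b - (a + b - x)) ^ 3) / 3 * B)"
    unfolding B_def using x
    by (intro abs_two_point_deviation_le[OF _ _ _ ac N deriv square_integrable]) (auto simp: m_def)
  ultimately have deviation: "\<bar>(b - a) * f x - integral {a..b} f\<bar> \<le> sqrt ((b - a) * W * B)"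
    by simp
  have "\<bar>f x - integral {a..b} f / (b - a)\<bar> = \<bar>(b - a) * f x - integral {a..b} f\<bar> / (b - a)"
    using \<open>a < b\<close> by (simp add: field_simps abs_divide)
  also have "\<dots> \<le> sqrt ((b - a) * W * B) / (b - a)"
    using deviation \<open>a < b\<close> by (simp add: divide_right_mono)
  also have "\<dots> = sqrt (b - a) * sqrt W * sqrt B / (b - a)"
    by (simp add: real_sqrt_mult)
  also have "\<dots> = (b - a) powr (-1/2) * sqrt W * sqrt B"
    using \<open>a < b\<close> by (simp add: field_simps powr_minus_divide powr_half_sqrt)
  finally show ?thesis
    unfolding W_def B_def .
qed

theorem corollary2p12:
  fixes a b :: real and f f' :: "real \<Rightarrow> real"
  assumes "a < b"
    and "absolutely_continuous_on a b f"
    and "AE t in lebesgue. t \<in> {a..b} \<longrightarrow> (f has_real_derivative f' t) (at t)"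
    and "f' \<in> borel_measurable (restrict_space lebesgue {a..b})"
    and "integrable (restrict_space lebesgue {a..b}) (\<lambda>t. (f' t)\<^sup>2)"
    and "\<And>x. x \<in> {a..b} \<Longrightarrow> f (a + b - x) = f x"
    and "x \<in> {a..(a + b) / 2}"
  shows "\<bar>f x - (1 / (b - a)) * (LINT t|restrict_space lebesgue {a..b}. f t)\<bar>
     \<le> (b - a) powr (-1/2)
        * sqrt ((b - a)\<^sup>2 / 48 + (x - (3 * a + b) / 4)\<^sup>2)
        * sqrt ((LINT t|restrict_space lebesgue {a..b}. (f' t)\<^sup>2) - (f b - f a)\<^sup>2 / (b - a))"
proof -
  obtain N where "negligible N" and "{t. \<not> (t \<in> {a..b} \<longrightarrow> (f has_real_derivative f' t) (at t))} \<subseteq> N"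
    using assms(3) unfolding eventually_ae_filter_negligible by blast
  then have deriv: "\<And>t. t \<in> {a..b} - N \<Longrightarrow> (f has_real_derivative f' t) (at t)"
    by blast
  have "(\<lambda>t. (f' t)\<^sup>2) integrable_on {a..b}"
    using integrable_on_lebesgue_on[OF assms(5)] by simp
  moreover have "f (a + b - x) = f x" and "f b = f a"
    using assms(1,7) assms(6)[of x] assms(6)[of a] by auto
  moreover have "(LINT t|restrict_space lebesgue {a..b}. f t) = integral {a..b} f"
    using assms(2) by (intro lebesgue_integral_eq_integral continuous_imp_integrable_real
        absolutely_continuous_on_imp_continuous_on) auto
  moreover have "(LINT t|restrict_space lebesgue {a..b}. (f' t)\<^sup>2) = integral {a..b} (\<lambda>t. (f' t)\<^sup>2)"
    using assms(5) by (intro lebesgue_integral_eq_integral) auto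
  ultimately show ?thesis
    using abs_deviation_from_mean_symmetric_le[OF assms(1,2) \<open>negligible N\<close> deriv] assms(7)
    by simp
qed

end
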